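(* Let $\mathcal{S}$ be a finite set of states, for each $s\in\mathcal{S}$ let $\mathcal{A}(s)$ be a finite nonempty set of actions, and let $\mathcal{P}:=\{(s,a): s\in\mathcal{S}, a\in\mathcal{A}(s)\}$ be the (finite) set of state-action pairs. Let $\mu,\mu'\in(\mathbb{R}_{>0})^{\mathcal{P}}$ be two fully supported measures on $\mathcal{P}$ and let $\pi(\mu),\pi(\mu')$ be their induced policies. If $\|\mu'-\mu\|_\infty\le \epsilon\,\min(\mu)$ for some $\epsilon<(2|\mathcal{P}|)^{-1}$, then $$\|\pi(\mu')-\pi(\mu)\|_\infty:=\max_{(s,a)\in\mathcal{P}}\bigl|\pi(\mu')(a|s)-\pi(\mu)(a|s)\bigr|\le 4\epsilon.$$
   Context: For a fully supported measure $\mu$ on $\mathcal{P}$, write $\mu(s):=\sum_{a\in\mathcal{A}(s)}\mu(s,a)$; the policy induced by $\mu$ is the randomized policy $\pi(\mu)(a|s):=\mu(s,a)/\mu(s)$ for $(s,a)\in\mathcal{P}$. Here $\min(\mu):=\min_{z\in\mathcal{P}}\mu(z)$, $\|\mu'-\mu\|_\infty:=\max_{z\in\mathcal{P}}|\mu'(z)-\mu(z)|$, and $|\mathcal{P}|$ is the number of state-action pairs. *)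

theory Defs
  imports Main Complex_Main
begin

definition pairs :: "'s set \<Rightarrow> ('s \<Rightarrow> 'a set) \<Rightarrow> ('s \<times> 'a) set" where
  "pairs S A = Sigma S A"

definition state_measure :: "('s \<Rightarrow> 'a set) \<Rightarrow> ('s \<times> 'a \<Rightarrow> real) \<Rightarrow> 's \<Rightarrow> real" where
  "state_measure A \<mu> s = (\<Sum>a\<in>A s. \<mu> (s, a))"

definition induced_policy :: "('s \<Rightarrow> 'a set) \<Rightarrow> ('s \<times> 'a \<Rightarrow> real) \<Rightarrow> 's \<times> 'a \<Rightarrow> real" where
  "induced_policy A \<mu> z = \<mu> z / state_measure A \<mu> (fst z)"

definition min_on :: "('s \<times> 'a) set \<Rightarrow> ('s \<times> 'a \<Rightarrow> real) \<Rightarrow> real" where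
  "min_on P \<mu> = Min (\<mu> ` P)"

definition sup_dist :: "('s \<times> 'a) set \<Rightarrow> ('s \<times> 'a \<Rightarrow> real) \<Rightarrow> ('s \<times> 'a \<Rightarrow> real) \<Rightarrow> real" where
  "sup_dist P f g = Max ((\<lambda>z. \<bar>f z - g z\<bar>) ` P)"

end

theory Submission
  imports Defs
begin

text \<open>
  Fix a pair (s,a) with n = |A(s)| and m = min(\<mu>). The numerator \<mu>(s,a) of the policy moves by at
  most \<epsilon> m and the denominator \<mu>(s) by at most n \<epsilon> m, while \<mu>(s) \<ge> n m and \<mu>(s,a) \<le> \<mu>(s).
  Hence \<mu>'(s) \<ge> n m (1 - \<epsilon>) and the two ratios differ by at most
  (1 + n) \<epsilon> m / (n m (1 - \<epsilon>)) \<le> 4 \<epsilon>.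
\<close>

lemma abs_ratio_diff_le:
  fixes x y X Y :: real
  assumes "0 < X" "0 < Y" "0 \<le> y" "y \<le> Y"
  shows "\<bar>x / X - y / Y\<bar> \<le> (\<bar>x - y\<bar> + \<bar>X - Y\<bar>) / X"
proof -
  have "x / X - y / Y = ((x - y) + (y / Y) * (Y - X)) / X"
    using assms by (simp add: field_simps)
  moreover have "\<bar>(y / Y) * (Y - X)\<bar> \<le> \<bar>X - Y\<bar>"
  proof -
    have "\<bar>(y / Y) * (Y - X)\<bar> = (y / Y) * \<bar>X - Y\<bar>"
      using assms by (simp add: abs_mult abs_minus_commute)
    also have "\<dots> \<le> 1 * \<bar>X - Y\<bar>"
      using assms by (intro mult_right_mono) auto
    finally show ?thesis by simp
  qed
  ultimately show ?thesis
    using assms(1) abs_triangle_ineq[of "x - y" "(y / Y) * (Y - X)"]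
    by (simp add: divide_right_mono)
qed

lemma abs_ratio_diff_le_4eps:
  fixes x y X Y n m e :: real
  assumes "0 < m" "1 \<le> n" "e \<le> 1 / 2"
    and "0 \<le> y" "y \<le> Y" "n * m \<le> Y"
    and "\<bar>x - y\<bar> \<le> e * m" "\<bar>X - Y\<bar> \<le> n * e * m"
  shows "\<bar>x / X - y / Y\<bar> \<le> 4 * e"
proof -
  have "0 \<le> e"
    using assms(1,7) abs_ge_zero[of "x - y"] zero_le_mult_iff[of e m] by linarith
  have "n * m / 2 = n * m * (1 / 2)"
    by simp
  also have "\<dots> \<le> n * m * (1 - e)"
    using assms(1-3) by (intro mult_left_mono) auto
  also have "\<dots> \<le> X"
    using assms(6,8) by (simp add: algebra_simps)
  finally have X_ge: "n * m / 2 \<le> X" .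
  have "0 < n * m"
    using assms(1,2) by simp
  hence "0 < X" "0 < Y"
    using X_ge assms(6) by linarith+
  have "\<bar>x / X - y / Y\<bar> \<le> (\<bar>x - y\<bar> + \<bar>X - Y\<bar>) / X"
    using \<open>0 < X\<close> \<open>0 < Y\<close> assms(4,5) by (rule abs_ratio_diff_le)
  also have "\<dots> \<le> (1 + n) * e * m / X"
    using \<open>0 < X\<close> assms(7,8) by (intro divide_right_mono) (auto simp: algebra_simps)
  also have "\<dots> \<le> (1 + n) * e * m / (n * m / 2)"
    using X_ge \<open>0 < n * m\<close> \<open>0 \<le> e\<close> assms(1,2) by (intro frac_le) auto
  also have "\<dots> = 2 * e * (1 + n) / n"
    using assms(1,2) by (simp add: field_simps)
  also have "\<dots> \<le> 2 * e * (2 * n) / n"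
    using \<open>0 \<le> e\<close> assms(2) by (intro divide_right_mono mult_left_mono) auto
  also have "\<dots> = 4 * e"
    using assms(2) by simp
  finally show ?thesis .
qed

lemma member_le_state_measure:
  assumes "finite (A s)" "a \<in> A s" "\<And>b. b \<in> A s \<Longrightarrow> 0 \<le> \<mu> (s, b)"
  shows "\<mu> (s, a) \<le> state_measure A \<mu> s"
  unfolding state_measure_def using assms by (intro member_le_sum) auto

lemma card_mult_le_state_measure:
  assumes "\<And>b. b \<in> A s \<Longrightarrow> m \<le> \<mu> (s, b)"
  shows "real (card (A s)) * m \<le> state_measure A \<mu> s"
  unfolding state_measure_def using assms by (rule sum_bounded_below)

lemma abs_state_measure_diff_le:
  assumes "\<And>b. b \<in> A s \<Longrightarrow> \<bar>\<mu>' (s, b) - \<mu> (s, b)\<bar> \<le> d"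
  shows "\<bar>state_measure A \<mu>' s - state_measure A \<mu> s\<bar> \<le> real (card (A s)) * d"
proof -
  have "\<bar>state_measure A \<mu>' s - state_measure A \<mu> s\<bar> = \<bar>\<Sum>b\<in>A s. \<mu>' (s, b) - \<mu> (s, b)\<bar>"
    unfolding state_measure_def by (simp add: sum_subtractf)
  also have "\<dots> \<le> (\<Sum>b\<in>A s. \<bar>\<mu>' (s, b) - \<mu> (s, b)\<bar>)"
    by (rule sum_abs)
  also have "\<dots> \<le> real (card (A s)) * d"
    using assms by (rule sum_bounded_above)
  finally show ?thesis .
qed

lemma abs_induced_policy_diff_le:
  assumes "finite (A s)" "a \<in> A s" "0 < m" "e \<le> 1 / 2"
    and "\<And>b. b \<in> A s \<Longrightarrow> m \<le> \<mu> (s, b)"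
    and "\<And>b. b \<in> A s \<Longrightarrow> \<bar>\<mu>' (s, b) - \<mu> (s, b)\<bar> \<le> e * m"
  shows "\<bar>induced_policy A \<mu>' (s, a) - induced_policy A \<mu> (s, a)\<bar> \<le> 4 * e"
  unfolding induced_policy_def fst_conv
proof (rule abs_ratio_diff_le_4eps[where n = "real (card (A s))"])
  show "1 \<le> real (card (A s))"
    using assms(1,2) by (auto simp: Suc_le_eq card_gt_0_iff)
  show "\<mu> (s, a) \<le> state_measure A \<mu> s"
    using assms(1,2,3,5) by (intro member_le_state_measure) (auto intro: order.trans[OF less_imp_le])
  show "real (card (A s)) * m \<le> state_measure A \<mu> s"
    using assms(5) by (rule card_mult_le_state_measure)
  show "\<bar>state_measure A \<mu>' s - state_measure A \<mu> s\<bar> \<le> real (card (A s)) * e * m"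
    using abs_state_measure_diff_le[of A s \<mu>' \<mu> "e * m"] assms(6) by (simp add: mult.assoc)
qed (use assms in \<open>auto intro: order.trans[OF less_imp_le]\<close>)

lemma min_on_le:
  assumes "finite P" "z \<in> P"
  shows "min_on P \<mu> \<le> \<mu> z"
  unfolding min_on_def using assms by simp

lemma min_on_pos:
  assumes "finite P" "P \<noteq> {}" "\<And>z. z \<in> P \<Longrightarrow> 0 < \<mu> z"
  shows "0 < min_on P \<mu>"
  unfolding min_on_def using assms by simp

lemma abs_diff_le_sup_dist:
  assumes "finite P" "z \<in> P"
  shows "\<bar>f z - g z\<bar> \<le> sup_dist P f g"
  unfolding sup_dist_def using assms by simp

lemma sup_dist_le_iff:
  assumes "finite P" "P \<noteq> {}"
  shows "sup_dist P f g \<le> c \<longleftrightarrow> (\<forall>z\<in>P. \<bar>f z - g z\<bar> \<le> c)"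
  unfolding sup_dist_def using assms by simp

theorem mainTheorem1:
  fixes S :: "'s set" and A :: "'s \<Rightarrow> 'a set"
    and \<mu> \<mu>' :: "'s \<times> 'a \<Rightarrow> real" and \<epsilon> :: real
  assumes "finite S" and "S \<noteq> {}"
    and "\<And>s. s \<in> S \<Longrightarrow> finite (A s) \<and> A s \<noteq> {}"
    and "\<And>z. z \<in> pairs S A \<Longrightarrow> \<mu> z > 0"
    and "\<And>z. z \<in> pairs S A \<Longrightarrow> \<mu>' z > 0"
    and "\<epsilon> < 1 / (2 * real (card (pairs S A)))"
    and "sup_dist (pairs S A) \<mu>' \<mu> \<le> \<epsilon> * min_on (pairs S A) \<mu>"
  shows "sup_dist (pairs S A) (induced_policy A \<mu>') (induced_policy A \<mu>) \<le> 4 * \<epsilon>"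
proof -
  let ?P = "pairs S A" and ?m = "min_on (pairs S A) \<mu>"
  have finite_P: "finite ?P" and nonempty_P: "?P \<noteq> {}"
    using assms(1-3) by (auto simp: pairs_def)
  have "1 \<le> card ?P"
    using finite_P nonempty_P by (simp add: Suc_le_eq card_gt_0_iff)
  hence "1 / (2 * real (card ?P)) \<le> 1 / 2"
    by (simp add: field_simps)
  hence "\<epsilon> \<le> 1 / 2"
    using assms(6) by linarith
  have close: "\<bar>\<mu>' z - \<mu> z\<bar> \<le> \<epsilon> * ?m" if "z \<in> ?P" for z
    using abs_diff_le_sup_dist[OF finite_P that, of \<mu>' \<mu>] assms(7) by linarith
  show ?thesis
    unfolding sup_dist_le_iff[OF finite_P nonempty_P]
  proof (clarify)
    fix s a assume "(s, a) \<in> ?P"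
    hence "s \<in> S" "a \<in> A s" and pair_in_P: "\<And>b. b \<in> A s \<Longrightarrow> (s, b) \<in> ?P"
      by (auto simp: pairs_def)
    show "\<bar>induced_policy A \<mu>' (s, a) - induced_policy A \<mu> (s, a)\<bar> \<le> 4 * \<epsilon>"
      using assms(3)[OF \<open>s \<in> S\<close>] \<open>a \<in> A s\<close> min_on_pos[OF finite_P nonempty_P assms(4)]
        \<open>\<epsilon> \<le> 1 / 2\<close> min_on_le[OF finite_P pair_in_P] close[OF pair_in_P]
      by (intro abs_induced_policy_diff_le) auto
  qed
qed

end
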